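(* Let $R$ be a GCD-domain and let $a\in R$ be a non-zero element with $a\notin R^{\ast}$. Then the following conditions on $a$ are all equivalent: (ii) there exist $n\geqslant 0$ and $s_0,s_1,\dots,s_n\in\operatorname{Sqf} R$ such that $a=s_n^{2^n}s_{n-1}^{2^{n-1}}\cdots s_1^2s_0$; (iii) there exist $n\geqslant 1$, $s_1,\dots,s_n\in(\operatorname{Sqf} R)\setminus R^{\ast}$, integers $0\leqslant k_1<k_2<\dots<k_n$, and $c\in R^{\ast}$ such that $a=c\,s_n^{2^{k_n}}s_{n-1}^{2^{k_{n-1}}}\cdots s_1^{2^{k_1}}$; (iv) there exist $n\geqslant 1$ and $s_1,\dots,s_n\in\operatorname{Sqf} R$ such that $s_i\mid s_{i+1}$ for $i=1,\dots,n-1$ and $a=s_1s_2\cdots s_n$; (v) there exist $n\geqslant 1$, $s_1,\dots,s_n\in(\operatorname{Sqf} R)\setminus R^{\ast}$, integers $k_1,\dots,k_n\geqslant 1$, and $c\in R^{\ast}$ such that $s_i\mid s_{i+1}$ and $s_i\not\sim s_{i+1}$ for $i=1,\dots,n-1$, and $a=c\,s_1^{k_1}s_2^{k_2}\cdots s_n^{k_n}$; (vi) there exist $n\geqslant 1$ and $s_1,\dots,s_n\in\operatorname{Sqf} R$ such that $s_i$ and $s_j$ are relatively prime for $i\neq j$, and $a=s_1s_2^2s_3^3\cdots s_n^n$; (vii) there exist $n\geqslant 1$, $s_1,\dots,s_n\in(\operatorname{Sqf} R)\setminus R^{\ast}$, integers $1\leqslant k_1<k_2<\dots<k_n$, and $c\in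 R^{\ast}$ such that $s_i$ and $s_j$ are relatively prime for $i\neq j$, and $a=c\,s_1^{k_1}s_2^{k_2}\cdots s_n^{k_n}$.
   Context: A domain is a commutative ring with identity without zero divisors. A GCD-domain is a domain in which the intersection of any two principal ideals is principal. $R^{\ast}$ denotes the set of invertible elements of $R$. For $a,b\in R$, $a\sim b$ means $a$ and $b$ are associated, and $a\mid b$ means $a$ divides $b$. Elements $a,b$ are relatively prime if they have no common non-invertible divisor. An element $a\in R$ is square-free if it cannot be written as $a=b^2c$ with $b\in R\setminus R^{\ast}$ and $c\in R$; $\operatorname{Sqf} R$ denotes the set of square-free elements of $R$. *)

theory Defs
  imports Main
begin

text \<open>A GCD-domain: a domain (type class idom) in which the intersection of any two
principal ideals is principal, i.e. for all x, y there is m with xR \<inter> yR = mR.\<close>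
definition gcd_domain :: "'a::idom itself \<Rightarrow> bool" where
  "gcd_domain _ \<longleftrightarrow>
     (\<forall>x y :: 'a. \<exists>m. {z. x dvd z} \<inter> {z. y dvd z} = {z. m dvd z})"

definition Sqf :: "'a::idom set" where
  "Sqf = {a. \<not> (\<exists>b c. \<not> (b dvd 1) \<and> a = b ^ 2 * c)}"

definition assoc :: "'a::idom \<Rightarrow> 'a \<Rightarrow> bool" where
  "assoc x y \<longleftrightarrow> x dvd y \<and> y dvd x"

definition rel_prime :: "'a::idom \<Rightarrow> 'a \<Rightarrow> bool" where
  "rel_prime x y \<longleftrightarrow> (\<forall>d. d dvd x \<and> d dvd y \<longrightarrow> (d dvd 1))"

end

theory Submission
  imports Defs
begin

(*
  Every one of the conditions exhibits a as a product of square-free elements; conversely, in a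
  GCD-domain such a product can be brought into each of the normal forms.

  For square-free x, y with gcd g, the element l = x (y / g) is square-free and x y = g l with
  g | l. Inserting the factors one at a time in this way sorts any product of square-free
  elements into a divisor chain s_1 | ... | s_n, which is (iv). The successive quotients u_j of
  the chain are pairwise relatively prime square-free divisors of s_n with a = u_1 u_2^2 ... u_n^n,
  which is (vi). Writing each exponent j in binary and collecting the factors with the k-th bit
  set gives (ii), because a product of pairwise relatively prime square-free elements is
  square-free. Discarding unit factors yields (iii) and (vii), and the tail products
  t_j t_{j+1} ... t_m of (vii) form the strictly increasing chain of (v).
*)

lemma Sqf_iff: "x \<in> Sqf \<longleftrightarrow> (\<forall>b. b\<^sup>2 dvd x \<longrightarrow> b dvd 1)"
  unfolding Sqf_def dvd_def[of "_\<^sup>2"] by blast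

lemma Sqf_nonzero: "x \<in> Sqf \<Longrightarrow> x \<noteq> 0"
  unfolding Sqf_iff by (metis dvd_0_left_iff power_zero_numeral zero_neq_one)

lemma Sqf_dvd: "x \<in> Sqf \<Longrightarrow> y dvd x \<Longrightarrow> y \<in> Sqf"
  unfolding Sqf_iff using dvd_trans by blast

lemma unit_in_Sqf: "c dvd 1 \<Longrightarrow> c \<in> Sqf"
  unfolding Sqf_iff power2_eq_square using dvd_mult_left dvd_trans by blast

lemma Sqf_rel_prime_factors: "x \<in> Sqf \<Longrightarrow> y * z dvd x \<Longrightarrow> rel_prime y z"
  unfolding Sqf_iff rel_prime_def power2_eq_square by (meson dvd_trans mult_dvd_mono)

lemma rel_prime_sym: "rel_prime x y \<Longrightarrow> rel_prime y x"
  unfolding rel_prime_def by blast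

lemma rel_prime_dvd_left: "rel_prime x y \<Longrightarrow> d dvd x \<Longrightarrow> rel_prime d y"
  unfolding rel_prime_def using dvd_trans by blast

lemma rel_prime_1_right: "rel_prime x 1"
  unfolding rel_prime_def by blast

lemma gcd_domain_lcm:
  fixes x y :: "'a::idom"
  assumes "gcd_domain TYPE('a)"
  obtains m where "\<And>z. x dvd z \<and> y dvd z \<longleftrightarrow> m dvd z"
  using assms unfolding gcd_domain_def set_eq_iff Int_iff mem_Collect_eq by (meson that)

lemma gcd_domain_lcm_times:
  fixes x y :: "'a::idom"
  assumes "gcd_domain TYPE('a)" and "x \<noteq> 0" and "y \<noteq> 0"
  obtains m g where "\<And>z. x dvd z \<and> y dvd z \<longleftrightarrow> m dvd z" "x * y = m * g" "g dvd x" "g dvd y"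
proof -
  obtain m where m: "\<And>z. x dvd z \<and> y dvd z \<longleftrightarrow> m dvd z"
    using gcd_domain_lcm[OF assms(1), where x = x and y = y] by blast
  have "m dvd x * y" using m[of "x * y"] by simp
  then obtain g where g: "x * y = m * g" ..
  have "x dvd m" "y dvd m" using m[of m] by simp_all
  then obtain u v where "m = x * u" "m = y * v" by (elim dvdE)
  with g assms(2,3) have "y = u * g" "x = v * g" by (simp_all add: ac_simps)
  then show ?thesis using that[OF m g] by simp
qed

lemma gcd_domain_gcd:
  fixes x y :: "'a::idom"
  assumes "gcd_domain TYPE('a)"
  obtains g where "g dvd x" "g dvd y" "\<And>d. d dvd x \<Longrightarrow> d dvd y \<Longrightarrow> d dvd g"
proof (cases "x = 0 \<or> y = 0")
  case True
  then show ?thesis by (metis dvd_0_right dvd_refl that)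
next
  case False
  then obtain m g where m: "\<And>z. x dvd z \<and> y dvd z \<longleftrightarrow> m dvd z"
    and g: "x * y = m * g" "g dvd x" "g dvd y"
    using gcd_domain_lcm_times[OF assms] by blast
  have "m \<noteq> 0" using g False by auto
  have "d dvd g" if "d dvd x" "d dvd y" for d
  proof -
    from that obtain x' y' where x': "x = d * x'" and y': "y = d * y'" by (elim dvdE)
    have "m dvd d * x' * y'" using m[of "d * x' * y'"] x' y' by (simp add: ac_simps)
    then obtain e where e: "d * x' * y' = m * e" ..
    have "m * g = m * (d * e)" by (metis g(1) e x' y' mult.left_commute)
    with \<open>m \<noteq> 0\<close> show ?thesis by simp
  qed
  with g(2,3) show ?thesis by (rule that)
qed

lemma rel_prime_mult_dvd:
  fixes x y :: "'a::idom"
  assumes "gcd_domain TYPE('a)" and "rel_prime x y" and "x dvd w" and "y dvd w"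
  shows "x * y dvd w"
proof (cases "x = 0 \<or> y = 0")
  case True
  then show ?thesis using assms(3,4) by auto
next
  case False
  then obtain m d where m: "\<And>z. x dvd z \<and> y dvd z \<longleftrightarrow> m dvd z"
    and d: "x * y = m * d" "d dvd x" "d dvd y"
    using gcd_domain_lcm_times[OF assms(1)] by blast
  have "d dvd 1" using d(2,3) assms(2) unfolding rel_prime_def by blast
  then have "x * y dvd m" using d(1) mult_dvd_mono[OF dvd_refl, of d 1 m] by simp
  also have "m dvd w" using m assms(3,4) by blast
  finally show ?thesis .
qed

lemma rel_prime_dvd_mult:
  fixes x y :: "'a::idom"
  assumes "gcd_domain TYPE('a)" and "rel_prime x y" and "x dvd y * w"
  shows "x dvd w"
proof (cases "y = 0")
  case True
  then have "x dvd 1" using assms(2) unfolding rel_prime_def by simp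
  then show ?thesis using one_dvd dvd_trans by blast
next
  case False
  have "x * y dvd y * w" using rel_prime_mult_dvd[OF assms] by simp
  with False show ?thesis by (simp add: mult.commute)
qed

lemma rel_prime_mult_right:
  fixes x y z :: "'a::idom"
  assumes "gcd_domain TYPE('a)" and "rel_prime x y" and "rel_prime x z"
  shows "rel_prime x (y * z)"
  unfolding rel_prime_def
proof clarify
  fix d assume "d dvd x" "d dvd y * z"
  have "rel_prime d y" using assms(2) \<open>d dvd x\<close> by (rule rel_prime_dvd_left)
  then have "d dvd z" using \<open>d dvd y * z\<close> by (rule rel_prime_dvd_mult[OF assms(1)])
  with \<open>d dvd x\<close> show "d dvd 1" using assms(3) unfolding rel_prime_def by blast
qed

lemma rel_prime_prod_right:
  fixes x :: "'a::idom"
  assumes "gcd_domain TYPE('a)" and "\<forall>j\<in>J. rel_prime x (f j)"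
  shows "rel_prime x (prod f J)"
  using assms(2)
proof (induction J rule: infinite_finite_induct)
  case (insert j J)
  then have "rel_prime x (f j * prod f J)" by (intro rel_prime_mult_right[OF assms(1)]) simp_all
  with insert.hyps show ?case by simp
qed (simp_all add: rel_prime_1_right)

lemma Sqf_mult:
  fixes x y :: "'a::idom"
  assumes G: "gcd_domain TYPE('a)" and x: "x \<in> Sqf" and y: "y \<in> Sqf" and "rel_prime x y"
  shows "x * y \<in> Sqf"
  unfolding Sqf_iff
proof clarify
  fix b assume b: "b\<^sup>2 dvd x * y"
  have "rel_prime x b" unfolding rel_prime_def
  proof clarify
    fix d assume "d dvd x" "d dvd b"
    then obtain x' where x': "x = d * x'" by (elim dvdE)
    have "d * d dvd d * (y * x')"
      using dvd_trans[OF dvd_power_same[OF \<open>d dvd b\<close>, of 2] b] x'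
      by (simp add: power2_eq_square ac_simps)
    moreover have "d \<noteq> 0" using x' Sqf_nonzero[OF x] by auto
    ultimately have "d dvd y * x'" by simp
    moreover have "rel_prime d y" using rel_prime_dvd_left[OF assms(4) \<open>d dvd x\<close>] .
    ultimately have "d dvd x'" by (rule rel_prime_dvd_mult[OF G, rotated])
    then have "d\<^sup>2 dvd x" using x' by (simp add: power2_eq_square)
    with x show "d dvd 1" unfolding Sqf_iff by blast
  qed
  then have "rel_prime x (b * b)" using rel_prime_mult_right[OF G] by blast
  then have "rel_prime (b\<^sup>2) x" by (simp add: power2_eq_square rel_prime_sym)
  then have "b\<^sup>2 dvd y" using b rel_prime_dvd_mult[OF G] by blast
  with y show "b dvd 1" unfolding Sqf_iff by blast
qed

lemma Sqf_prod:
  fixes f :: "'b \<Rightarrow> 'a::idom"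
  assumes G: "gcd_domain TYPE('a)"
    and "\<forall>i\<in>I. f i \<in> Sqf" and "pairwise (\<lambda>i j. rel_prime (f i) (f j)) I"
  shows "prod f I \<in> Sqf"
  using assms(2,3)
proof (induction I rule: infinite_finite_induct)
  case (insert i I)
  have "rel_prime (f i) (prod f I)"
    using insert.hyps insert.prems(2) by (intro rel_prime_prod_right[OF G]) (auto simp: pairwise_def)
  with insert show ?case by (simp add: Sqf_mult[OF G] pairwise_insert)
qed (simp_all add: unit_in_Sqf)

lemma prod_list_conv_prod_nth: "prod_list xs = (\<Prod>i\<in>{1..length xs}. xs ! (i - 1))"
proof -
  have "prod_list xs = (\<Prod>i<length xs. xs ! i)"
    by (induction xs) (simp_all del: prod.lessThan_Suc add: prod.lessThan_Suc_shift)
  also have "\<dots> = (\<Prod>i\<in>{1..length xs}. xs ! (i - 1))"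
    by (simp add: prod.atLeast1_atMost_eq)
  finally show ?thesis .
qed

lemma Sqf_gcd_split:
  fixes x y :: "'a::idom"
  assumes G: "gcd_domain TYPE('a)" and x: "x \<in> Sqf" and y: "y \<in> Sqf"
  obtains g l where "g \<in> Sqf" "l \<in> Sqf" "x * y = g * l" "g dvd x" "g dvd y" "x dvd l"
    "\<And>d. d dvd x \<Longrightarrow> d dvd y \<Longrightarrow> d dvd g"
proof -
  obtain g where gx: "g dvd x" and gy: "g dvd y" and gcd: "\<And>d. d dvd x \<Longrightarrow> d dvd y \<Longrightarrow> d dvd g"
    using gcd_domain_gcd[OF G] by blast
  from gy obtain y' where y': "y = g * y'" ..
  have "rel_prime x y'"
    unfolding rel_prime_def
  proof clarify
    fix d assume "d dvd x" "d dvd y'"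
    then have "d dvd g" using gcd y' by simp
    then have "d\<^sup>2 dvd y" using \<open>d dvd y'\<close> y' by (simp add: power2_eq_square mult_dvd_mono)
    with y show "d dvd 1" unfolding Sqf_iff by blast
  qed
  then have "x * y' \<in> Sqf" using Sqf_mult[OF G x] Sqf_dvd[OF y] y' by simp
  show ?thesis
  proof (rule that)
    show "x * y = g * (x * y')" using y' by (simp add: ac_simps)
  qed (use \<open>x * y' \<in> Sqf\<close> Sqf_dvd[OF x gx] gx gy gcd in simp_all)
qed

(* The last conjunct is the invariant showing that g, a common divisor of l and of L,
   divides every element of the list built by the recursive insertion of l. *)
lemma sorted_dvd_insert_Sqf:
  fixes x :: "'a::idom"
  assumes G: "gcd_domain TYPE('a)"
  shows "x \<in> Sqf \<Longrightarrow> set L \<subseteq> Sqf \<Longrightarrow> sorted_wrt (dvd) L \<Longrightarrow>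
    \<exists>L'. set L' \<subseteq> Sqf \<and> sorted_wrt (dvd) L' \<and> prod_list L' = x * prod_list L \<and>
      (\<forall>d. d dvd x \<longrightarrow> (\<forall>z\<in>set L. d dvd z) \<longrightarrow> (\<forall>w\<in>set L'. d dvd w))"
proof (induction L arbitrary: x)
  case Nil
  then show ?case by (intro exI[of _ "[x]"]) simp
next
  case (Cons s L)
  have "s \<in> Sqf" "set L \<subseteq> Sqf" "sorted_wrt (dvd) L" and s_dvd: "\<forall>z\<in>set L. s dvd z"
    using Cons.prems by simp_all
  obtain g l where gl: "g \<in> Sqf" "l \<in> Sqf" "x * s = g * l" "g dvd x" "g dvd s" "x dvd l"
    and gcd: "\<And>d. d dvd x \<Longrightarrow> d dvd s \<Longrightarrow> d dvd g"
    using Sqf_gcd_split[OF G \<open>x \<in> Sqf\<close> \<open>s \<in> Sqf\<close>] by blast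
  obtain L' where L': "set L' \<subseteq> Sqf" "sorted_wrt (dvd) L'" "prod_list L' = l * prod_list L"
    and common: "\<forall>d. d dvd l \<longrightarrow> (\<forall>z\<in>set L. d dvd z) \<longrightarrow> (\<forall>w\<in>set L'. d dvd w)"
    using Cons.IH[OF gl(2) \<open>set L \<subseteq> Sqf\<close> \<open>sorted_wrt (dvd) L\<close>] by blast
  have "g dvd l" using gl(4,6) by (rule dvd_trans)
  moreover have "\<forall>z\<in>set L. g dvd z" using s_dvd dvd_trans[OF gl(5)] by blast
  ultimately have "\<forall>w\<in>set L'. g dvd w" using common by blast
  then have "sorted_wrt (dvd) (g # L')" using L'(2) by simp
  moreover have "set (g # L') \<subseteq> Sqf" using gl(1) L'(1) by simp
  moreover have "prod_list (g # L') = x * prod_list (s # L)"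
    using L'(3) gl(3) by (simp add: mult.assoc)
  moreover have "\<forall>w\<in>set (g # L'). d dvd w" if "d dvd x" "\<forall>z\<in>set (s # L). d dvd z" for d
  proof -
    have "d dvd g" using gcd that by simp
    moreover have "\<forall>w\<in>set L'. d dvd w"
      using common[rule_format, OF dvd_trans[OF \<open>d dvd x\<close> gl(6)]] that(2) by simp
    ultimately show ?thesis by simp
  qed
  ultimately show ?case by blast
qed

definition sqf_product :: "'a::idom \<Rightarrow> bool" where
  "sqf_product x \<longleftrightarrow> (\<exists>xs. set xs \<subseteq> Sqf \<and> x = prod_list xs)"

lemma sqf_product_Sqf: "x \<in> Sqf \<Longrightarrow> sqf_product x"
  unfolding sqf_product_def by (intro exI[of _ "[x]"]) simp

lemma sqf_product_unit: "c dvd 1 \<Longrightarrow> sqf_product c"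
  by (intro sqf_product_Sqf unit_in_Sqf)

lemma sqf_product_mult: "sqf_product x \<Longrightarrow> sqf_product y \<Longrightarrow> sqf_product (x * y)"
  unfolding sqf_product_def by (metis prod_list.append set_append sup.bounded_iff)

lemma sqf_product_power: "sqf_product x \<Longrightarrow> sqf_product (x ^ k)"
  by (induction k) (simp_all add: sqf_product_mult sqf_product_unit)

lemma sqf_product_prod: "\<forall>i\<in>I. sqf_product (f i) \<Longrightarrow> sqf_product (prod f I)"
  by (induction I rule: infinite_finite_induct) (simp_all add: sqf_product_mult sqf_product_unit)

lemma sqf_product_sorted_dvd_list:
  fixes x :: "'a::idom"
  assumes G: "gcd_domain TYPE('a)" and "sqf_product x"
  obtains L where "set L \<subseteq> Sqf" "sorted_wrt (dvd) L" "prod_list L = x"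
proof -
  obtain xs where xs: "set xs \<subseteq> Sqf" "x = prod_list xs"
    using assms(2) unfolding sqf_product_def by blast
  have "\<exists>L. set L \<subseteq> Sqf \<and> sorted_wrt (dvd) L \<and> prod_list L = prod_list xs"
    using xs(1)
  proof (induction xs)
    case (Cons y xs)
    then obtain L where "set L \<subseteq> Sqf" "sorted_wrt (dvd) L" "prod_list L = prod_list xs" by auto
    with Cons.prems show ?case using sorted_dvd_insert_Sqf[OF G, of y L] by auto
  qed (intro exI[of _ "[]"], simp)
  with xs(2) that show ?thesis by blast
qed

lemma sqf_product_imp_dvd_chain:
  fixes a :: "'a::idom"
  assumes "gcd_domain TYPE('a)" and "sqf_product a" and "\<not> a dvd 1"
  shows "\<exists>(n::nat) (s::nat \<Rightarrow> 'a). n \<ge> 1 \<and> (\<forall>i\<in>{1..n}. s i \<in> Sqf) \<and>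
    (\<forall>i\<in>{1..<n}. s i dvd s (Suc i)) \<and> a = (\<Prod>i\<in>{1..n}. s i)"
proof -
  obtain L where L: "set L \<subseteq> Sqf" "sorted_wrt (dvd) L" "prod_list L = a"
    using sqf_product_sorted_dvd_list[OF assms(1,2)] .
  have "L \<noteq> []" using L(3) assms(3) by auto
  moreover have "L ! (i - 1) dvd L ! (Suc i - 1)" if "i \<in> {1..<length L}" for i
    using sorted_wrt_nth_less[OF L(2)] that by auto
  moreover have "L ! (i - 1) \<in> Sqf" if "i \<in> {1..length L}" for i
    using L(1) that by auto
  ultimately show ?thesis using L(3) prod_list_conv_prod_nth[of L]
    by (intro exI[of _ "length L"] exI[of _ "\<lambda>i. L ! (i - 1)"]) (auto simp: Suc_le_eq)
qed

lemma dvd_chain_tail_products: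
  fixes s :: "nat \<Rightarrow> 'a::comm_monoid_mult"
  assumes "\<forall>i\<in>{1..<n}. s i dvd s (Suc i)"
  obtains u where "\<forall>i\<in>{1..n}. s i = (\<Prod>j\<in>{n + 1 - i..n}. u j)"
proof -
  obtain q where q: "\<forall>i\<in>{1..<n}. s (Suc i) = s i * q i"
    using bchoice[OF assms[unfolded dvd_def]] by blast
  define u where "u j = (if j = n then s 1 else q (n - j))" for j
  have "1 \<le> i \<longrightarrow> i \<le> n \<longrightarrow> s i = (\<Prod>j\<in>{n + 1 - i..n}. u j)" for i
  proof (induction i)
    case (Suc i)
    show ?case
    proof (intro impI)
      assume "Suc i \<le> n"
      show "s (Suc i) = (\<Prod>j\<in>{n + 1 - Suc i..n}. u j)"
      proof (cases "i = 0")
        case False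
        with \<open>Suc i \<le> n\<close> have "{n + 1 - Suc i..n} = insert (n - i) {n + 1 - i..n}"
          and "n - i \<notin> {n + 1 - i..n}" "n - i \<noteq> n" by auto
        with q Suc.IH False \<open>Suc i \<le> n\<close> show ?thesis by (simp add: u_def mult.commute)
      qed (simp add: u_def)
    qed
  qed simp
  then show ?thesis by (intro that[of u]) simp
qed

lemma prod_tail_products_power:
  fixes u :: "nat \<Rightarrow> 'a::comm_semiring_1"
  shows "(\<Prod>i\<in>{1..n}. (\<Prod>j\<in>{n + 1 - i..n}. u j) ^ e i) =
    (\<Prod>j\<in>{1..n}. u j ^ (\<Sum>i\<in>{n + 1 - j..n}. e i))"
proof -
  have "(\<Prod>i\<in>{1..n}. (\<Prod>j\<in>{n + 1 - i..n}. u j) ^ e i) =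
      (\<Prod>i\<in>{1..n}. \<Prod>j\<in>{j. j \<in> {1..n} \<and> n + 1 - i \<le> j}. u j ^ e i)"
  proof (rule prod.cong)
    fix i assume "i \<in> {1..n}"
    then have "{n + 1 - i..n} = {j. j \<in> {1..n} \<and> n + 1 - i \<le> j}" by auto
    then show "(\<Prod>j\<in>{n + 1 - i..n}. u j) ^ e i = (\<Prod>j\<in>{j. j \<in> {1..n} \<and> n + 1 - i \<le> j}. u j ^ e i)"
      by (simp add: prod_power_distrib)
  qed simp
  also have "\<dots> = (\<Prod>j\<in>{1..n}. \<Prod>i\<in>{i. i \<in> {1..n} \<and> n + 1 - i \<le> j}. u j ^ e i)"
    by (rule prod.swap_restrict) simp_all
  also have "\<dots> = (\<Prod>j\<in>{1..n}. u j ^ (\<Sum>i\<in>{n + 1 - j..n}. e i))"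
  proof (rule prod.cong)
    fix j assume "j \<in> {1..n}"
    then have "{i. i \<in> {1..n} \<and> n + 1 - i \<le> j} = {n + 1 - j..n}" by auto
    then show "(\<Prod>i\<in>{i. i \<in> {1..n} \<and> n + 1 - i \<le> j}. u j ^ e i) = u j ^ (\<Sum>i\<in>{n + 1 - j..n}. e i)"
      by (simp add: power_sum)
  qed simp
  finally show ?thesis .
qed

lemma dvd_chain_imp_coprime_powers:
  fixes s :: "nat \<Rightarrow> 'a::idom"
  assumes "n \<ge> 1" and "\<forall>i\<in>{1..n}. s i \<in> Sqf" and "\<forall>i\<in>{1..<n}. s i dvd s (Suc i)"
    and "a = (\<Prod>i\<in>{1..n}. s i)"
  shows "\<exists>(n::nat) (u::nat \<Rightarrow> 'a). n \<ge> 1 \<and> (\<forall>i\<in>{1..n}. u i \<in> Sqf) \<and>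
    (\<forall>i\<in>{1..n}. \<forall>j\<in>{1..n}. i \<noteq> j \<longrightarrow> rel_prime (u i) (u j)) \<and> a = (\<Prod>i\<in>{1..n}. u i ^ i)"
proof -
  obtain u where u: "\<forall>i\<in>{1..n}. s i = (\<Prod>j\<in>{n + 1 - i..n}. u j)"
    using dvd_chain_tail_products[OF assms(3)] by blast
  have "s n = prod u {1..n}" using u assms(1) by simp
  moreover have "s n \<in> Sqf" using assms(1,2) by simp
  ultimately have top: "prod u {1..n} \<in> Sqf" by simp
  have "(\<Prod>i\<in>{1..n}. s i) = (\<Prod>i\<in>{1..n}. (\<Prod>j\<in>{n + 1 - i..n}. u j) ^ 1)"
    using u by (intro prod.cong) simp_all
  also have "\<dots> = (\<Prod>j\<in>{1..n}. u j ^ card {n + 1 - j..n})"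
    by (simp only: prod_tail_products_power) simp
  also have "\<dots> = (\<Prod>j\<in>{1..n}. u j ^ j)"
    by (intro prod.cong) simp_all
  finally have "(\<Prod>i\<in>{1..n}. s i) = (\<Prod>j\<in>{1..n}. u j ^ j)" .
  moreover have "u i \<in> Sqf" if "i \<in> {1..n}" for i
    using Sqf_dvd[OF top dvd_prodI[of "{1..n}" i u]] that by simp
  moreover have "rel_prime (u i) (u j)" if "i \<in> {1..n}" "j \<in> {1..n}" "i \<noteq> j" for i j
  proof (rule Sqf_rel_prime_factors[OF top])
    show "u i * u j dvd prod u {1..n}"
      using prod_dvd_prod_subset[of "{1..n}" "{i, j}" u] that by simp
  qed
  ultimately show ?thesis using assms(1,4) by blast
qed

lemma sum_binary_digits:
  fixes i :: nat
  shows "i < 2 ^ N \<Longrightarrow> (\<Sum>k<N. if odd (i div 2 ^ k) then 2 ^ k else 0) = i"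
proof (induction N arbitrary: i)
  case (Suc N)
  have shift: "(if odd (i div 2 ^ Suc k) then 2 ^ Suc k else 0) =
      2 * (if odd (i div 2 div 2 ^ k) then 2 ^ k else 0 :: nat)" for k
    by (simp add: div_mult2_eq)
  have "(\<Sum>k<Suc N. if odd (i div 2 ^ k) then 2 ^ k else 0 :: nat) =
      (if odd i then 1 else 0) + 2 * (\<Sum>k<N. if odd (i div 2 div 2 ^ k) then 2 ^ k else 0)"
    by (simp only: sum.lessThan_Suc_shift shift sum_distrib_left) simp
  also have "(\<Sum>k<N. if odd (i div 2 div 2 ^ k) then 2 ^ k else 0) = i div 2"
    using Suc by simp
  finally show ?case by presburger
qed simp

lemma coprime_powers_imp_binary_powers:
  fixes u :: "nat \<Rightarrow> 'a::idom"
  assumes G: "gcd_domain TYPE('a)" and "\<forall>i\<in>{1..n}. u i \<in> Sqf"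
    and "\<forall>i\<in>{1..n}. \<forall>j\<in>{1..n}. i \<noteq> j \<longrightarrow> rel_prime (u i) (u j)"
    and "a = (\<Prod>i\<in>{1..n}. u i ^ i)"
  shows "\<exists>(N::nat) (s::nat \<Rightarrow> 'a). (\<forall>k\<le>N. s k \<in> Sqf) \<and> a = (\<Prod>k\<le>N. s k ^ (2 ^ k))"
proof -
  define s where "s k = (\<Prod>i\<in>{i \<in> {1..n}. odd (i div 2 ^ k)}. u i)" for k
  have "u i ^ i = (\<Prod>k\<le>n. if odd (i div 2 ^ k) then u i ^ 2 ^ k else 1)" if "i \<in> {1..n}" for i
  proof -
    have "i \<le> n" "n < 2 ^ n" using that less_exp by auto
    then have "i < 2 ^ Suc n" unfolding power_Suc by linarith
    then have "u i ^ i = u i ^ (\<Sum>k<Suc n. if odd (i div 2 ^ k) then 2 ^ k else 0)"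
      by (simp only: sum_binary_digits)
    also have "\<dots> = (\<Prod>k\<le>n. if odd (i div 2 ^ k) then u i ^ 2 ^ k else 1)"
      unfolding power_sum lessThan_Suc_atMost by (intro prod.cong) simp_all
    finally show ?thesis .
  qed
  then have "a = (\<Prod>i\<in>{1..n}. \<Prod>k\<le>n. if odd (i div 2 ^ k) then u i ^ 2 ^ k else 1)"
    using assms(4) by simp
  also have "\<dots> = (\<Prod>k\<le>n. \<Prod>i\<in>{1..n}. if odd (i div 2 ^ k) then u i ^ 2 ^ k else 1)"
    by (rule prod.swap)
  also have "\<dots> = (\<Prod>k\<le>n. s k ^ 2 ^ k)"
  proof (rule prod.cong)
    fix k
    have "(\<Prod>i\<in>{1..n}. if odd (i div 2 ^ k) then u i ^ 2 ^ k else 1) =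
        (\<Prod>i\<in>{i \<in> {1..n}. odd (i div 2 ^ k)}. u i ^ 2 ^ k)"
      by (rule prod.inter_filter[symmetric]) simp
    then show "(\<Prod>i\<in>{1..n}. if odd (i div 2 ^ k) then u i ^ 2 ^ k else 1) = s k ^ 2 ^ k"
      by (simp add: s_def prod_power_distrib)
  qed simp
  moreover have "s k \<in> Sqf" for k
    unfolding s_def using assms(2,3) by (intro Sqf_prod[OF G]) (auto simp: pairwise_def)
  ultimately show ?thesis by blast
qed

lemma prod_strip_units:
  fixes h :: "nat \<Rightarrow> 'a::comm_monoid_mult"
  assumes "finite I" and "\<forall>i\<in>I. \<not> P i \<longrightarrow> h i dvd 1"
  obtains m :: nat and k c where "strict_mono_on {1..m} k" "\<forall>j\<in>{1..m}. k j \<in> I \<and> P (k j)"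
    "c dvd 1" "prod h I = c * (\<Prod>j\<in>{1..m}. h (k j))"
proof -
  define J where "J = {i \<in> I. P i}"
  define xs where "xs = sorted_list_of_set J"
  define k where "k j = xs ! (j - 1)" for j
  have "finite J" using assms(1) by (simp add: J_def)
  then have set_xs: "set xs = J" and "distinct xs" and sorted: "sorted_wrt (<) xs"
    by (simp_all add: xs_def)
  have mono: "strict_mono_on {1..length xs} k"
  proof (rule strict_mono_onI)
    fix r t assume "r \<in> {1..length xs}" "t \<in> {1..length xs}" "r < t"
    then show "k r < k t" unfolding k_def by (intro sorted_wrt_nth_less[OF sorted]) auto
  qed
  have range: "\<forall>j\<in>{1..length xs}. k j \<in> I \<and> P (k j)"
  proof
    fix j assume "j \<in> {1..length xs}"
    then have "k j \<in> set xs" unfolding k_def by (intro nth_mem) auto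
    then show "k j \<in> I \<and> P (k j)" using set_xs by (simp add: J_def)
  qed
  have unit: "prod h (I - J) dvd 1"
    using prod_dvd_prod[of "I - J" h "\<lambda>_. 1"] assms(2) by (simp add: J_def)
  have "prod h I = prod h (I - J) * (\<Prod>j\<in>{1..length xs}. h (k j))"
  proof -
    have "prod h I = prod h (I - J) * prod h J"
      using assms(1) by (intro prod.subset_diff) (auto simp: J_def)
    also have "prod h J = prod_list (map h xs)"
      using prod.distinct_set_conv_list[OF \<open>distinct xs\<close>] set_xs by simp
    also have "\<dots> = (\<Prod>j\<in>{1..length xs}. h (k j))"
      unfolding prod_list_conv_prod_nth by (intro prod.cong) (auto simp: k_def)
    finally show ?thesis .
  qed
  with mono range unit show ?thesis by (rule that)
qed

lemma prod_power_strip_units: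
  fixes s :: "nat \<Rightarrow> 'a::comm_semiring_1"
  assumes "finite I" and "\<not> (\<Prod>i\<in>I. s i ^ e i) dvd 1"
  obtains m :: nat and k c where "m \<ge> 1" "strict_mono_on {1..m} k"
    "\<forall>j\<in>{1..m}. k j \<in> I \<and> \<not> s (k j) dvd 1" "c dvd 1"
    "(\<Prod>i\<in>I. s i ^ e i) = c * (\<Prod>j\<in>{1..m}. s (k j) ^ e (k j))"
proof -
  have "s i ^ e i dvd 1" if "s i dvd 1" for i
    using dvd_power_same[OF that, of "e i"] by simp
  then have "\<forall>i\<in>I. \<not> \<not> s i dvd 1 \<longrightarrow> s i ^ e i dvd 1" by blast
  then obtain m :: nat and k c where mkc: "strict_mono_on {1..m} k"
    "\<forall>j\<in>{1..m}. k j \<in> I \<and> \<not> s (k j) dvd 1" "c dvd 1"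
    "(\<Prod>i\<in>I. s i ^ e i) = c * (\<Prod>j\<in>{1..m}. s (k j) ^ e (k j))"
    by (rule prod_strip_units[OF assms(1)])
  have "m \<ge> 1"
  proof (rule ccontr)
    assume "\<not> m \<ge> 1"
    then show False using mkc(3,4) assms(2) by simp
  qed
  from this mkc show ?thesis by (rule that)
qed

lemma binary_powers_imp_nonunit_binary_powers:
  fixes s :: "nat \<Rightarrow> 'a::idom"
  assumes "\<not> a dvd 1" and "\<forall>i\<le>N. s i \<in> Sqf" and "a = (\<Prod>i\<le>N. s i ^ (2 ^ i))"
  shows "\<exists>(n::nat) (t::nat \<Rightarrow> 'a) (k::nat \<Rightarrow> nat) c. n \<ge> 1 \<and>
    (\<forall>j\<in>{1..n}. t j \<in> Sqf \<and> \<not> (t j dvd 1)) \<and>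
    (\<forall>j\<in>{1..<n}. k j < k (Suc j)) \<and> (c dvd 1) \<and> a = c * (\<Prod>j\<in>{1..n}. t j ^ (2 ^ k j))"
proof -
  obtain n :: nat and k c where "n \<ge> 1" "strict_mono_on {1..n} k"
    "\<forall>j\<in>{1..n}. k j \<in> {..N} \<and> \<not> s (k j) dvd 1" "c dvd 1"
    "a = c * (\<Prod>j\<in>{1..n}. s (k j) ^ 2 ^ k j)"
    using prod_power_strip_units[of "{..N}" s "\<lambda>i. 2 ^ i"] assms by auto
  moreover from this(2) have "\<forall>j\<in>{1..<n}. k j < k (Suc j)"
    by (auto intro: strict_mono_onD)
  ultimately show ?thesis using assms(2) by (intro exI[of _ n] exI[of _ "s \<circ> k"]) auto
qed

lemma coprime_powers_imp_nonunit_coprime_powers: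
  fixes u :: "nat \<Rightarrow> 'a::idom"
  assumes "\<not> a dvd 1" and "\<forall>i\<in>{1..n}. u i \<in> Sqf"
    and "\<forall>i\<in>{1..n}. \<forall>j\<in>{1..n}. i \<noteq> j \<longrightarrow> rel_prime (u i) (u j)"
    and "a = (\<Prod>i\<in>{1..n}. u i ^ i)"
  shows "\<exists>(m::nat) (t::nat \<Rightarrow> 'a) (k::nat \<Rightarrow> nat) c. m \<ge> 1 \<and>
    (\<forall>j\<in>{1..m}. t j \<in> Sqf \<and> \<not> (t j dvd 1)) \<and>
    1 \<le> k 1 \<and> (\<forall>j\<in>{1..<m}. k j < k (Suc j)) \<and>
    (\<forall>i\<in>{1..m}. \<forall>j\<in>{1..m}. i \<noteq> j \<longrightarrow> rel_prime (t i) (t j)) \<and>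
    (c dvd 1) \<and> a = c * (\<Prod>j\<in>{1..m}. t j ^ k j)"
proof -
  obtain m :: nat and k c where "m \<ge> 1" and mono: "strict_mono_on {1..m} k"
    and k: "\<forall>j\<in>{1..m}. k j \<in> {1..n} \<and> \<not> u (k j) dvd 1" and "c dvd 1"
    and "a = c * (\<Prod>j\<in>{1..m}. u (k j) ^ k j)"
    using prod_power_strip_units[of "{1..n}" u "\<lambda>i. i"] assms(1,4) by auto
  moreover have "\<forall>j\<in>{1..<m}. k j < k (Suc j)"
    using mono by (auto intro: strict_mono_onD)
  moreover have "rel_prime (u (k i)) (u (k j))" if "i \<in> {1..m}" "j \<in> {1..m}" "i \<noteq> j" for i j
    using assms(3) k that strict_mono_on_imp_inj_on[OF mono] by (meson inj_onD)
  ultimately show ?thesis using assms(2)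
    by (intro exI[of _ m] exI[of _ "u \<circ> k"] exI[of _ k] exI[of _ c]) auto
qed

lemma sum_tail_differences:
  fixes K :: "nat \<Rightarrow> nat"
  assumes "\<forall>j<m. K j \<le> K (Suc j)" and "l \<le> m"
  shows "(\<Sum>i\<in>{m + 1 - l..m}. K (m + 1 - i) - K (m - i)) = K l - K 0"
  using assms(2)
proof (induction l)
  case (Suc l)
  have "K 0 \<le> K l" using Suc.prems assms(1) by (induction l) (auto intro: order_trans)
  moreover have "K l \<le> K (Suc l)" using Suc.prems assms(1) by simp
  moreover have "{m + 1 - Suc l..m} = insert (m - l) {m + 1 - l..m}" "m - l \<notin> {m + 1 - l..m}"
    using Suc.prems by auto
  ultimately show ?case using Suc by (simp add: Suc_diff_le)
qed simp

lemma nonunit_coprime_powers_imp_strict_dvd_chain: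
  fixes t :: "nat \<Rightarrow> 'a::idom"
  assumes G: "gcd_domain TYPE('a)"
    and t: "\<forall>j\<in>{1..m}. t j \<in> Sqf \<and> \<not> t j dvd 1"
    and "1 \<le> k 1" and "\<forall>j\<in>{1..<m}. k j < k (Suc j)"
    and "\<forall>i\<in>{1..m}. \<forall>j\<in>{1..m}. i \<noteq> j \<longrightarrow> rel_prime (t i) (t j)"
    and "m \<ge> 1" and "c dvd 1" and "a = c * (\<Prod>j\<in>{1..m}. t j ^ k j)"
  shows "\<exists>(n::nat) (s::nat \<Rightarrow> 'a) (e::nat \<Rightarrow> nat) c. n \<ge> 1 \<and>
    (\<forall>i\<in>{1..n}. s i \<in> Sqf \<and> \<not> (s i dvd 1) \<and> e i \<ge> 1) \<and>
    (\<forall>i\<in>{1..<n}. s i dvd s (Suc i) \<and> \<not> assoc (s i) (s (Suc i))) \<and>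
    (c dvd 1) \<and> a = c * (\<Prod>i\<in>{1..n}. s i ^ e i)"
proof -
  \<comment> \<open>s i is the product of the i factors with the largest exponents; extending k by K 0 = 0,
    its exponent is the gap K (m + 1 - i) - K (m - i).\<close>
  define K where "K = k(0 := 0)"
  define s where "s i = (\<Prod>l\<in>{m + 1 - i..m}. t l)" for i
  define e where "e i = K (m + 1 - i) - K (m - i)" for i
  have K_strict: "K j < K (Suc j)" if "j < m" for j
    using that assms(3,4) by (cases j) (auto simp: K_def)
  have "(\<Prod>j\<in>{1..m}. t j ^ k j) = (\<Prod>j\<in>{1..m}. t j ^ (\<Sum>i\<in>{m + 1 - j..m}. e i))"
  proof (rule prod.cong)
    fix j assume "j \<in> {1..m}"
    then show "t j ^ k j = t j ^ (\<Sum>i\<in>{m + 1 - j..m}. e i)"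
      using sum_tail_differences[of m K j] K_strict by (simp add: e_def K_def less_imp_le)
  qed simp
  also have "\<dots> = (\<Prod>i\<in>{1..m}. s i ^ e i)"
    unfolding s_def prod_tail_products_power ..
  finally have a_eq: "a = c * (\<Prod>i\<in>{1..m}. s i ^ e i)" using assms(8) by simp
  have s_Sqf: "s i \<in> Sqf" if "i \<in> {1..m}" for i
    unfolding s_def using t assms(5) that by (intro Sqf_prod[OF G]) (auto simp: pairwise_def)
  have s_nonunit: "\<not> s i dvd 1" if "i \<in> {1..m}" for i
  proof
    assume "s i dvd 1"
    moreover have "t m dvd s i" unfolding s_def using that by (intro dvd_prodI) auto
    ultimately have "t m dvd 1" by (rule dvd_trans[rotated])
    with t assms(6) show False by auto
  qed
  have e_pos: "e i \<ge> 1" if "i \<in> {1..m}" for i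
    using K_strict[of "m - i"] that by (simp add: e_def Suc_diff_le)
  have s_chain: "s i dvd s (Suc i) \<and> \<not> assoc (s i) (s (Suc i))" if "i \<in> {1..<m}" for i
  proof
    have split: "s (Suc i) = t (m - i) * s i"
      unfolding s_def using that by (simp add: atLeastAtMost_insertL[symmetric] Suc_diff_le)
    then show "s i dvd s (Suc i)" by simp
    show "\<not> assoc (s i) (s (Suc i))"
    proof
      assume "assoc (s i) (s (Suc i))"
      then have "t (m - i) * s i dvd 1 * s i" using split by (simp add: assoc_def)
      moreover have "s i \<noteq> 0" using Sqf_nonzero[OF s_Sqf, of i] that by simp
      ultimately have "t (m - i) dvd 1" by (simp only: dvd_mult_cancel_right) simp
      then show False using t that by auto
    qed
  qed
  show ?thesis
    using assms(6,7) a_eq s_Sqf s_nonunit e_pos s_chain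
    by (intro exI[of _ m] exI[of _ s] exI[of _ e] exI[of _ c]) simp
qed

theorem proposition1:
  fixes a :: "'a::idom"
  assumes "gcd_domain TYPE('a)"
    and "a \<noteq> 0" and "\<not> (a dvd 1)"
  defines "C2 \<equiv> (\<exists>(n::nat) (s::nat \<Rightarrow> 'a). (\<forall>i\<le>n. s i \<in> Sqf) \<and>
                  a = (\<Prod>i\<le>n. s i ^ (2 ^ i)))"
    and "C3 \<equiv> (\<exists>(n::nat) (s::nat \<Rightarrow> 'a) (k::nat \<Rightarrow> nat) c. n \<ge> 1 \<and>
                  (\<forall>i\<in>{1..n}. s i \<in> Sqf \<and> \<not> (s i dvd 1)) \<and>
                  (\<forall>i\<in>{1..<n}. k i < k (Suc i)) \<and> (c dvd 1) \<and>
                  a = c * (\<Prod>i\<in>{1..n}. s i ^ (2 ^ k i)))"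
    and "C4 \<equiv> (\<exists>(n::nat) (s::nat \<Rightarrow> 'a). n \<ge> 1 \<and>
                  (\<forall>i\<in>{1..n}. s i \<in> Sqf) \<and>
                  (\<forall>i\<in>{1..<n}. s i dvd s (Suc i)) \<and>
                  a = (\<Prod>i\<in>{1..n}. s i))"
    and "C5 \<equiv> (\<exists>(n::nat) (s::nat \<Rightarrow> 'a) (k::nat \<Rightarrow> nat) c. n \<ge> 1 \<and>
                  (\<forall>i\<in>{1..n}. s i \<in> Sqf \<and> \<not> (s i dvd 1) \<and> k i \<ge> 1) \<and>
                  (\<forall>i\<in>{1..<n}. s i dvd s (Suc i) \<and> \<not> assoc (s i) (s (Suc i))) \<and>
                  (c dvd 1) \<and>
                  a = c * (\<Prod>i\<in>{1..n}. s i ^ k i))"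
    and "C6 \<equiv> (\<exists>(n::nat) (s::nat \<Rightarrow> 'a). n \<ge> 1 \<and>
                  (\<forall>i\<in>{1..n}. s i \<in> Sqf) \<and>
                  (\<forall>i\<in>{1..n}. \<forall>j\<in>{1..n}. i \<noteq> j \<longrightarrow> rel_prime (s i) (s j)) \<and>
                  a = (\<Prod>i\<in>{1..n}. s i ^ i))"
    and "C7 \<equiv> (\<exists>(n::nat) (s::nat \<Rightarrow> 'a) (k::nat \<Rightarrow> nat) c. n \<ge> 1 \<and>
                  (\<forall>i\<in>{1..n}. s i \<in> Sqf \<and> \<not> (s i dvd 1)) \<and>
                  1 \<le> k 1 \<and> (\<forall>i\<in>{1..<n}. k i < k (Suc i)) \<and>
                  (\<forall>i\<in>{1..n}. \<forall>j\<in>{1..n}. i \<noteq> j \<longrightarrow> rel_prime (s i) (s j)) \<and>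
                  (c dvd 1) \<and>
                  a = c * (\<Prod>i\<in>{1..n}. s i ^ k i))"
  shows "(C2 \<longleftrightarrow> C3) \<and> (C2 \<longleftrightarrow> C4) \<and> (C2 \<longleftrightarrow> C5) \<and>
         (C2 \<longleftrightarrow> C6) \<and> (C2 \<longleftrightarrow> C7)"
proof -
  note G = assms(1)
  have sqf_product_a: "sqf_product a" if "C2 \<or> C3 \<or> C4 \<or> C5 \<or> C6 \<or> C7"
    using that unfolding C2_def C3_def C4_def C5_def C6_def C7_def
    by (elim disjE exE conjE)
      (auto intro!: sqf_product_mult sqf_product_prod sqf_product_power
        intro: sqf_product_Sqf sqf_product_unit)
  have "sqf_product a \<Longrightarrow> C4"
    unfolding C4_def by (rule sqf_product_imp_dvd_chain[OF G _ assms(3)])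
  moreover have "C4 \<Longrightarrow> C6"
    unfolding C4_def C6_def using dvd_chain_imp_coprime_powers by blast
  moreover have "C6 \<Longrightarrow> C2"
    unfolding C6_def C2_def using coprime_powers_imp_binary_powers[OF G] by blast
  moreover have "C2 \<Longrightarrow> C3"
    unfolding C2_def C3_def using binary_powers_imp_nonunit_binary_powers[OF assms(3)] by blast
  moreover have "C6 \<Longrightarrow> C7"
    unfolding C6_def C7_def using coprime_powers_imp_nonunit_coprime_powers[OF assms(3)] by blast
  moreover have "C7 \<Longrightarrow> C5"
    unfolding C7_def C5_def using nonunit_coprime_powers_imp_strict_dvd_chain[OF G] by blast
  ultimately show ?thesis using sqf_product_a by blast
qed

end
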